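(* Assume $\delta>d$, $\alpha=\gamma/(\delta-d)$, and that $f$ is not a polynomial product. Let $V\subset\mathbb{C}$ be a set whose closure is contained in $A_p$. Then the functions $$G_n(z,w)=\frac{1}{d^n}\log^+\frac{|w_n|}{|z_n|^\alpha},\qquad (z_n,w_n)=f^n(z,w),$$ converge uniformly on $V\times\mathbb{C}$ to $G_z^\alpha(w)=\lim_{n\to\infty}d^{-n}\log^+\big(|Q_z^n(w)|/|p^n(z)|^\alpha\big)$.
   Context: Let $p(z)=z^\delta+O(z^{\delta-1})$ be a monic polynomial of degree $\delta\ge 2$, and let $q(z,w)=b(z)w^d+(\text{terms of lower degree in } w)$ be a polynomial with $d=\deg_w q\ge 2$, where $b$ is a monic polynomial of degree $\gamma\ge 0$. Let $f(z,w)=(p(z),q(z,w))$; $f$ is a polynomial product if $q$ does not depend on $z$. Write $Q_z^n=q_{p^{n-1}(z)}\circ\cdots\circ q_{p(z)}\circ q_z$ with $q_z=q(z,\cdot)$, so $f^n(z,w)=(p^n(z),Q_z^n(w))$. Let $A_p=\{z: p^n(z)\to\infty\}$. For $\delta>d$, $\alpha=\max\{n_j/(\delta-m_j)\}$ over monomials $z^{n_j}w^{m_j}$ appearing in $q$ with nonzero coefficient. *)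

theory Defs
  imports "HOL-Analysis.Analysis" "HOL-Computational_Algebra.Polynomial"
begin

text \<open>The two-variable polynomial q(z,w) is represented as a polynomial in w whose
coefficients are polynomials in z: q(z,w) = sum_m (coeff q m)(z) w^m.
Its monomial z^n w^m has coefficient coeff (coeff q m) n.\<close>

definition qeval :: "complex poly poly \<Rightarrow> complex \<Rightarrow> complex \<Rightarrow> complex" where
  "qeval q z w = poly (map_poly (\<lambda>a. poly a z) q) w"

definition skew :: "complex poly \<Rightarrow> complex poly poly \<Rightarrow> complex \<times> complex \<Rightarrow> complex \<times> complex" where
  "skew p q = (\<lambda>(z, w). (poly p z, qeval q z w))"

text \<open>Q_z^n = q_{p^{n-1}(z)} o ... o q_{p(z)} o q_z.\<close>
fun Qiter :: "complex poly \<Rightarrow> complex poly poly \<Rightarrow> nat \<Rightarrow> complex \<Rightarrow> complex \<Rightarrow> complex" where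
  "Qiter p q 0 z w = w"
| "Qiter p q (Suc n) z w = Qiter p q n (poly p z) (qeval q z w)"

definition logplus :: "real \<Rightarrow> real" where
  "logplus x = max 0 (ln x)"

definition escape_set :: "complex poly \<Rightarrow> complex set" where
  "escape_set p = {z. filterlim (\<lambda>n. norm ((poly p ^^ n) z)) at_top sequentially}"

definition poly_product :: "complex poly poly \<Rightarrow> bool" where
  "poly_product q \<longleftrightarrow> (\<forall>m. degree (coeff q m) = 0)"

definition alpha_exp :: "nat \<Rightarrow> complex poly poly \<Rightarrow> real" where
  "alpha_exp \<delta> q = Max {real n / (real \<delta> - real m) | n m. coeff (coeff q m) n \<noteq> 0}"

end

theory Submission
  imports Defs
begin

(*
  Write H(z,w) = log+ (|w| / |z|^alpha) (the "escape height") and G_n = H o f^n / d^n.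
  The proof has three ingredients:
  (1) A one-step estimate: there are R and C with |H(f(z,w)) - d H(z,w)| <= C whenever
      |z| >= R.  For |z| large, |p(z)| is comparable to |z|^delta, the leading coefficient
      b(z) of q is comparable to |z|^gamma = (|z|^alpha)^(delta-d), and every coefficient
      of w^m in q is bounded by (|z|^alpha)^(delta-m) by the choice of alpha.  With
      r = |w|/|z|^alpha this squeezes |q(z,w)|/|p(z)|^alpha between polynomial expressions
      in r of degree d, whose log+ differs from d log+ r by a bounded amount.
  (2) Uniform escape: since closure V is contained in A_p, a compactness argument gives N
      with |p^n(z)| >= R for all z in V and n >= N.
  (3) Hence |G_(n+1) - G_n| <= (C/d) (1/d)^n uniformly on V x C for n >= N, and a
      Weierstrass M-test on the telescoping series gives uniform convergence of G_n.
*)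

lemma qeval_sum: "qeval q a b = (\<Sum>m\<le>degree q. poly (coeff q m) a * b ^ m)"
proof -
  let ?r = "map_poly (\<lambda>c. poly c a) q"
  have "degree ?r \<le> degree q" by (rule map_poly_degree_leq)
  then have "poly ?r b = poly (\<Sum>i\<le>degree q. monom (coeff ?r i) i) b"
    using poly_as_sum_of_monoms' by metis
  also have "\<dots> = (\<Sum>m\<le>degree q. poly (coeff q m) a * b ^ m)"
    by (simp add: poly_sum poly_monom coeff_map_poly)
  finally show ?thesis unfolding qeval_def .
qed

lemma skew_iter: "(skew p q ^^ n) x = ((poly p ^^ n) (fst x), Qiter p q n (fst x) (snd x))"
proof (induction n arbitrary: x)
  case 0
  then show ?case by simp
next
  case (Suc n)
  have "(skew p q ^^ Suc n) x = (skew p q ^^ n) (poly p (fst x), qeval q (fst x) (snd x))"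
    by (simp only: funpow_Suc_right comp_def) (simp add: skew_def split_beta)
  then show ?case
    using Suc.IH by (simp only: funpow_Suc_right comp_def Qiter.simps fst_conv snd_conv)
qed

lemma poly_norm_bound:
  fixes c :: "complex poly"
  shows "\<exists>K\<ge>0. \<forall>z. 1 \<le> norm z \<longrightarrow> norm (poly c z) \<le> K * norm z ^ degree c"
proof (intro exI conjI allI impI)
  let ?K = "\<Sum>i\<le>degree c. norm (coeff c i)"
  show "0 \<le> ?K" by (simp add: sum_nonneg)
  fix z :: complex
  assume z: "1 \<le> norm z"
  have "norm (poly c z) \<le> (\<Sum>i\<le>degree c. norm (coeff c i * z ^ i))"
    unfolding poly_altdef by (rule norm_sum)
  also have "\<dots> \<le> (\<Sum>i\<le>degree c. norm (coeff c i) * norm z ^ degree c)"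
    by (intro sum_mono) (auto simp: norm_mult norm_power intro!: mult_left_mono power_increasing z)
  also have "\<dots> = ?K * norm z ^ degree c" by (simp add: sum_distrib_right)
  finally show "norm (poly c z) \<le> ?K * norm z ^ degree c" .
qed

text \<open>A monic polynomial of degree k satisfies |z|^k/2 <= |a(z)| <= 2|z|^k for large |z|:
  the lower-order terms are at most half of the leading term.\<close>
lemma monic_poly_norm_comparable:
  fixes a :: "complex poly"
  assumes "lead_coeff a = 1"
  shows "\<exists>R\<ge>1. \<forall>z. R \<le> norm z \<longrightarrow>
           norm z ^ degree a / 2 \<le> norm (poly a z) \<and> norm (poly a z) \<le> 2 * norm z ^ degree a"
proof -
  let ?k = "degree a"
  let ?T = "\<Sum>i<?k. norm (coeff a i)"
  show ?thesis
  proof (intro exI[of _ "max 1 (2 * ?T)"] conjI allI impI)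
    fix z :: complex
    assume z: "max 1 (2 * ?T) \<le> norm z"
    let ?tail = "\<Sum>i<?k. coeff a i * z ^ i"
    have split: "poly a z = z ^ ?k + ?tail"
      unfolding poly_altdef using assms by (simp add: lessThan_Suc_atMost[symmetric] add.commute)
    have "norm ?tail \<le> (\<Sum>i<?k. norm (coeff a i) * norm z ^ (?k - 1))"
      using z by (intro order_trans[OF norm_sum] sum_mono)
        (auto simp: norm_mult norm_power intro!: mult_left_mono power_increasing)
    also have "\<dots> = ?T * norm z ^ (?k - 1)" by (simp add: sum_distrib_right)
    also have "\<dots> \<le> norm z ^ ?k / 2"
    proof (cases "?k = 0")
      case False
      then have "norm z ^ ?k = norm z * norm z ^ (?k - 1)" by (metis power_eq_if)
      moreover have "2 * ?T * norm z ^ (?k - 1) \<le> norm z * norm z ^ (?k - 1)"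
        using z by (intro mult_right_mono) auto
      ultimately show ?thesis by simp
    qed simp
    finally have tail: "norm ?tail \<le> norm z ^ ?k / 2" .
    have "norm z ^ ?k - norm ?tail \<le> norm (poly a z)"
      using norm_diff_ineq[of "z ^ ?k" ?tail] by (simp add: split norm_power)
    moreover have "norm (poly a z) \<le> norm z ^ ?k + norm ?tail"
      using norm_triangle_ineq[of "z ^ ?k" ?tail] by (simp add: split norm_power)
    ultimately show "norm z ^ ?k / 2 \<le> norm (poly a z)" "norm (poly a z) \<le> 2 * norm z ^ ?k"
      using tail by auto
  qed simp
qed

lemma monic_poly_expanding:
  fixes p :: "complex poly"
  assumes "lead_coeff p = 1" "degree p \<ge> 2"
  shows "\<exists>R. \<forall>a. R \<le> norm a \<longrightarrow> norm a \<le> norm (poly p a)"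
proof -
  obtain R where R: "\<And>a. R \<le> norm a \<Longrightarrow> norm a ^ degree p / 2 \<le> norm (poly p a)"
    using monic_poly_norm_comparable[OF assms(1)] by blast
  show ?thesis
  proof (intro exI[of _ "max R 4"] allI impI)
    fix a :: complex
    assume a: "max R 4 \<le> norm a"
    have "norm a * norm a \<le> norm a ^ degree p"
      using a assms(2) power_increasing[of 2 "degree p" "norm a"] by (simp add: power2_eq_square)
    moreover have "4 * norm a \<le> norm a * norm a" using a by (intro mult_right_mono) auto
    ultimately show "norm a \<le> norm (poly p a)" using R[of a] a by linarith
  qed
qed

lemma alpha_exp_bound:
  fixes q :: "complex poly poly"
  assumes "degree q < \<delta>" "coeff q m \<noteq> 0"
  shows "real (degree (coeff q m)) \<le> alpha_exp \<delta> q * (real \<delta> - real m)"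
proof -
  define S where "S = {real n / (real \<delta> - real m) | n m. coeff (coeff q m) n \<noteq> 0}"
  define D where "D = (\<Sum>m\<le>degree q. degree (coeff q m))"
  have "S \<subseteq> (\<lambda>(n, m). real n / (real \<delta> - real m)) ` ({..D} \<times> {..degree q})"
  proof
    fix x
    assume "x \<in> S"
    then obtain n m' where x: "x = real n / (real \<delta> - real m')" and c: "coeff (coeff q m') n \<noteq> 0"
      unfolding S_def by blast
    have m': "m' \<le> degree q" using c by (metis coeff_0 le_degree)
    have "n \<le> degree (coeff q m')" using c by (rule le_degree)
    also have "\<dots> \<le> D" unfolding D_def using m' by (intro member_le_sum) auto
    finally show "x \<in> (\<lambda>(n, m). real n / (real \<delta> - real m)) ` ({..D} \<times> {..degree q})"
      using x m' by force
  qed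
  then have "finite S" by (rule finite_subset) auto
  moreover have "real (degree (coeff q m)) / (real \<delta> - real m) \<in> S"
    unfolding S_def using assms(2)
    by (intro CollectI exI[of _ "degree (coeff q m)"] exI[of _ m]) auto
  ultimately have "real (degree (coeff q m)) / (real \<delta> - real m) \<le> alpha_exp \<delta> q"
    unfolding alpha_exp_def S_def[symmetric] by (rule Max_ge)
  moreover have "m \<le> degree q" using assms(2) by (metis le_degree leading_coeff_0_iff)
  then have "real \<delta> - real m > 0" using assms(1) by simp
  ultimately show ?thesis by (simp add: pos_divide_le_eq mult.commute)
qed

lemma coeff_norm_bound:
  fixes q :: "complex poly poly"
  assumes "degree q < \<delta>" "0 \<le> alpha_exp \<delta> q"
  shows "\<exists>K\<ge>0. \<forall>z m. 1 \<le> norm z \<longrightarrow> m \<le> degree q \<longrightarrow>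
           norm (poly (coeff q m) z) \<le> K * (norm z powr alpha_exp \<delta> q) ^ (\<delta> - m)"
proof -
  let ?A = "alpha_exp \<delta> q"
  have "\<forall>m. \<exists>K\<ge>0. \<forall>z. 1 \<le> norm z \<longrightarrow>
      norm (poly (coeff q m) z) \<le> K * norm z ^ degree (coeff q m)"
    using poly_norm_bound by blast
  then obtain Kf where Kf: "\<And>m. Kf m \<ge> 0"
    "\<And>m z. 1 \<le> norm z \<Longrightarrow> norm (poly (coeff q m) z) \<le> Kf m * norm z ^ degree (coeff q m)"
    by metis
  define K where "K = (\<Sum>m\<le>degree q. Kf m)"
  show ?thesis
  proof (intro exI[of _ K] conjI allI impI)
    show K0: "0 \<le> K" unfolding K_def using Kf(1) by (simp add: sum_nonneg)
    fix z :: complex and m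
    assume z: "1 \<le> norm z" and m: "m \<le> degree q"
    have Z0: "norm z > 0" using z by linarith
    show "norm (poly (coeff q m) z) \<le> K * (norm z powr ?A) ^ (\<delta> - m)"
    proof (cases "coeff q m = 0")
      case True
      then show ?thesis using K0 by simp
    next
      case False
      have "norm z ^ degree (coeff q m) = norm z powr real (degree (coeff q m))"
        using Z0 by (simp add: powr_realpow)
      also have "\<dots> \<le> norm z powr (real (\<delta> - m) * ?A)"
        using alpha_exp_bound[OF assms(1) False] z m assms(1)
        by (intro powr_mono) (auto simp: of_nat_diff mult.commute)
      also have "\<dots> = (norm z powr ?A) ^ (\<delta> - m)" using Z0 by (simp add: powr_power)
      finally have zz: "norm z ^ degree (coeff q m) \<le> (norm z powr ?A) ^ (\<delta> - m)" .
      have Km: "Kf m \<le> K" unfolding K_def using m Kf(1) by (intro member_le_sum) auto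
      have "Kf m * norm z ^ degree (coeff q m) \<le> K * (norm z powr ?A) ^ (\<delta> - m)"
        using Km zz Kf(1) K0 by (intro mult_mono) auto
      then show ?thesis using Kf(2)[OF z, of m] by linarith
    qed
  qed
qed

lemma qeval_term_bound:
  fixes c :: "complex poly" and t K :: real
  assumes t: "t > 0" and m: "m \<le> \<delta>" and c: "norm (poly c a) \<le> K * t ^ (\<delta> - m)"
  shows "norm (poly c a * b ^ m) \<le> K * t ^ \<delta> * (norm b / t) ^ m"
proof -
  have "norm (poly c a * b ^ m) = norm (poly c a) * (t ^ m * (norm b / t) ^ m)"
    using t by (simp add: norm_mult norm_power power_divide)
  also have "\<dots> \<le> K * t ^ (\<delta> - m) * (t ^ m * (norm b / t) ^ m)"
    using c t by (intro mult_right_mono) auto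
  also have "\<dots> = K * (t ^ (\<delta> - m) * t ^ m) * (norm b / t) ^ m" by (simp add: mult_ac)
  also have "t ^ (\<delta> - m) * t ^ m = t ^ \<delta>" using m by (simp add: power_add[symmetric])
  finally show ?thesis .
qed

lemma qeval_norm_upper:
  fixes q :: "complex poly poly" and t K :: real
  assumes t: "t > 0" and dq: "degree q \<le> \<delta>"
    and coeffs: "\<And>m. m \<le> degree q \<Longrightarrow> norm (poly (coeff q m) a) \<le> K * t ^ (\<delta> - m)"
  shows "norm (qeval q a b) \<le> K * t ^ \<delta> * (\<Sum>m\<le>degree q. (norm b / t) ^ m)"
proof -
  have "norm (qeval q a b) \<le> (\<Sum>m\<le>degree q. norm (poly (coeff q m) a * b ^ m))"
    unfolding qeval_sum by (rule norm_sum)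
  also have "\<dots> \<le> (\<Sum>m\<le>degree q. K * t ^ \<delta> * (norm b / t) ^ m)"
    using dq by (intro sum_mono qeval_term_bound[OF t] coeffs) auto
  finally show ?thesis by (simp add: sum_distrib_left)
qed

lemma qeval_norm_lower:
  fixes q :: "complex poly poly" and t K :: real
  assumes t: "t > 0" and dq: "degree q \<le> \<delta>"
    and coeffs: "\<And>m. m \<le> degree q \<Longrightarrow> norm (poly (coeff q m) a) \<le> K * t ^ (\<delta> - m)"
    and lead: "t ^ (\<delta> - degree q) / 2 \<le> norm (poly (lead_coeff q) a)"
  shows "t ^ \<delta> * ((norm b / t) ^ degree q / 2 - K * (\<Sum>m<degree q. (norm b / t) ^ m))
           \<le> norm (qeval q a b)"
proof -
  let ?d = "degree q" and ?r = "norm b / t"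
  let ?rest = "\<Sum>m<?d. poly (coeff q m) a * b ^ m"
  have split: "qeval q a b = poly (lead_coeff q) a * b ^ ?d + ?rest"
    unfolding qeval_sum by (simp add: lessThan_Suc_atMost[symmetric])
  have "norm ?rest \<le> (\<Sum>m<?d. K * t ^ \<delta> * ?r ^ m)"
    using dq by (intro order_trans[OF norm_sum] sum_mono qeval_term_bound[OF t] coeffs) auto
  then have rest: "norm ?rest \<le> K * t ^ \<delta> * (\<Sum>m<?d. ?r ^ m)" by (simp add: sum_distrib_left)
  have "t ^ \<delta> * ?r ^ ?d / 2 = t ^ (\<delta> - ?d) / 2 * (t ^ ?d * ?r ^ ?d)"
    using dq by (simp add: power_add[symmetric])
  also have "\<dots> \<le> norm (poly (lead_coeff q) a) * (t ^ ?d * ?r ^ ?d)"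
    using lead t by (intro mult_right_mono) auto
  also have "\<dots> = norm (poly (lead_coeff q) a * b ^ ?d)"
    using t by (simp add: norm_mult norm_power power_divide)
  finally have "t ^ \<delta> * ?r ^ ?d / 2 \<le> norm (poly (lead_coeff q) a * b ^ ?d)" .
  moreover have "norm (poly (lead_coeff q) a * b ^ ?d) - norm ?rest \<le> norm (qeval q a b)"
    unfolding split by (rule norm_diff_ineq)
  ultimately show ?thesis using rest by (simp add: algebra_simps)
qed

lemma logplus_nonneg: "0 \<le> logplus x"
  by (simp add: logplus_def)

lemma logplus_mono: "0 \<le> x \<Longrightarrow> x \<le> y \<Longrightarrow> logplus x \<le> logplus y"
  by (cases "x = 0") (auto simp: logplus_def max_def)

lemma logplus_max: "0 \<le> r \<Longrightarrow> logplus r = ln (max 1 r)"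
  unfolding logplus_def by (cases "r = 0") (auto simp: max_def)

text \<open>If Q and P are comparable to T S and T respectively, the quotient Q/P is controlled by
  S; this turns the bounds on |q| and |p| into bounds on |q(a,b)|/|p(a)|^alpha.\<close>
lemma quotient_bounds:
  fixes T P Q S L u :: real
  assumes T: "0 < T" and u: "0 < u" and Q: "0 \<le> Q"
    and P: "T / u \<le> P" "P \<le> u * T" and QS: "Q \<le> T * S" and QL: "T * L \<le> Q"
  shows "Q / P \<le> u * S" and "L / u \<le> Q / P"
proof -
  have "0 < T / u" using T u by simp
  then have P0: "0 < P" using P(1) by linarith
  have "Q / P \<le> (T * S) / (T / u)" using Q QS P(1) \<open>0 < T / u\<close> by (intro frac_le) auto
  also have "(T * S) / (T / u) = u * S" using T u by simp
  finally show "Q / P \<le> u * S" .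
  show "L / u \<le> Q / P"
  proof (cases "L \<le> 0")
    case True
    then have "L / u \<le> 0" using u by (simp add: divide_nonpos_pos)
    moreover have "0 \<le> Q / P" using Q P0 by simp
    ultimately show ?thesis by linarith
  next
    case False
    have "L * P \<le> L * (u * T)" using False P(2) by (intro mult_left_mono) auto
    also have "\<dots> \<le> u * Q" using QL u by (simp add: mult_ac)
    finally have "L * P / u \<le> Q" using u by (simp add: pos_divide_le_eq mult.commute)
    then show ?thesis using P0 by (simp add: pos_le_divide_eq)
  qed
qed

lemma logplus_upper_sum_powers:
  fixes r x B :: real and d :: nat
  assumes r: "0 \<le> r" and x: "0 \<le> x" and B: "1 \<le> B" and xB: "x \<le> B * (\<Sum>m\<le>d. r ^ m)"
  shows "logplus x \<le> ln (B * (d + 1)) + d * logplus r"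
proof -
  define M where "M = max 1 r"
  have M: "1 \<le> M" "r \<le> M" by (auto simp: M_def)
  have "r ^ m \<le> M ^ d" if "m \<le> d" for m
    using power_mono[OF M(2) r, of m] power_increasing[OF that M(1)] by linarith
  then have "(\<Sum>m\<le>d. r ^ m) \<le> (\<Sum>m\<le>d. M ^ d)" by (intro sum_mono) auto
  also have "\<dots> = (d + 1) * M ^ d" by simp
  finally have "B * (\<Sum>m\<le>d. r ^ m) \<le> B * ((d + 1) * M ^ d)"
    using B by (intro mult_left_mono) auto
  then have "x \<le> B * (d + 1) * M ^ d" using xB by (simp add: mult.assoc)
  moreover have B1: "1 \<le> B * (d + 1)" using mult_mono[OF B, of 1 "d + 1"] B by simp
  moreover have "1 \<le> M ^ d" using M by simp
  ultimately have bound: "x \<le> B * (d + 1) * M ^ d" and big: "1 \<le> B * (d + 1) * M ^ d"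
    using mult_mono[OF B1 \<open>1 \<le> M ^ d\<close>] by auto
  have "logplus r = ln M" using r by (simp add: logplus_max M_def)
  have "logplus x \<le> logplus (B * (d + 1) * M ^ d)" using x bound by (rule logplus_mono)
  also have "\<dots> = ln (B * (d + 1) * M ^ d)" using big by (simp add: logplus_def)
  also have "\<dots> = ln (B * (d + 1)) + d * logplus r"
    using B B1 M \<open>logplus r = ln M\<close> by (simp add: ln_mult ln_realpow)
  finally show ?thesis .
qed

lemma logplus_lower_leading_power:
  fixes r x K u :: real and d :: nat
  assumes d: "1 \<le> d" and K: "0 \<le> K" and u: "0 < u" and r: "1 \<le> r" "4 * K * d \<le> r"
    and x: "(r ^ d / 2 - K * (\<Sum>m<d. r ^ m)) / u \<le> x"
  shows "d * logplus r \<le> logplus x + ln (4 * u)"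
proof -
  have "(\<Sum>m<d. r ^ m) \<le> (\<Sum>m<d. r ^ (d - 1))"
    using r by (intro sum_mono power_increasing) auto
  then have "K * (\<Sum>m<d. r ^ m) \<le> K * d * r ^ (d - 1)"
    using mult_left_mono[OF _ K] by (simp add: mult.assoc)
  also have "\<dots> \<le> r / 4 * r ^ (d - 1)" using r by (intro mult_right_mono) auto
  also have "\<dots> = r ^ d / 4" using d by (simp add: power_eq_if)
  finally have "r ^ d / 4 / u \<le> (r ^ d / 2 - K * (\<Sum>m<d. r ^ m)) / u"
    using u by (intro divide_right_mono) auto
  then have lower: "r ^ d / (4 * u) \<le> x" using x by simp
  have pos: "0 < r ^ d / (4 * u)" using r u by simp
  have "d * ln r - ln (4 * u) = ln (r ^ d / (4 * u))"
    using r u by (simp add: ln_div ln_realpow)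
  also have "\<dots> \<le> ln x" using lower pos by simp
  also have "\<dots> \<le> logplus x" by (simp add: logplus_def)
  finally show ?thesis using r by (simp add: logplus_def)
qed

lemma logplus_comparison:
  fixes d :: nat and K u :: real
  assumes d: "1 \<le> d" and K: "0 \<le> K" and u: "1 \<le> u"
  shows "\<exists>C. \<forall>r x. 0 \<le> r \<longrightarrow> 0 \<le> x \<longrightarrow> x \<le> u * K * (\<Sum>m\<le>d. r ^ m) \<longrightarrow>
           (r ^ d / 2 - K * (\<Sum>m<d. r ^ m)) / u \<le> x \<longrightarrow> \<bar>logplus x - d * logplus r\<bar> \<le> C"
proof -
  define K1 where "K1 = max 1 K"
  define r0 where "r0 = max 1 (4 * K * d)"
  define C where "C = ln (u * K1 * (d + 1)) + d * ln r0 + ln (4 * u)"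
  have K1: "1 \<le> K1" "K \<le> K1" by (auto simp: K1_def)
  have uK1: "1 \<le> u * K1" using mult_mono[OF u K1(1)] u by simp
  have "1 \<le> u * K1 * (d + 1)" using mult_mono[OF uK1, of 1 "d + 1"] uK1 by simp
  then have nonneg: "0 \<le> ln (u * K1 * (d + 1))" "0 \<le> d * ln r0" "0 \<le> ln (4 * u)"
    using u by (auto simp: r0_def)
  show ?thesis
  proof (intro exI[of _ C] allI impI)
    fix r x :: real
    assume r: "0 \<le> r" and x: "0 \<le> x" and up: "x \<le> u * K * (\<Sum>m\<le>d. r ^ m)"
      and low: "(r ^ d / 2 - K * (\<Sum>m<d. r ^ m)) / u \<le> x"
    have "u * K * (\<Sum>m\<le>d. r ^ m) \<le> u * K1 * (\<Sum>m\<le>d. r ^ m)"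
      using K1(2) u r by (intro mult_right_mono mult_left_mono sum_nonneg) auto
    then have "logplus x \<le> ln (u * K1 * (d + 1)) + d * logplus r"
      using up by (intro logplus_upper_sum_powers[OF r x uK1]) auto
    then have "logplus x - d * logplus r \<le> C"
      using nonneg unfolding C_def by linarith
    moreover have "d * logplus r - logplus x \<le> C"
    proof (cases "r \<le> r0")
      case True
      then have "d * logplus r \<le> d * ln r0"
        using r by (simp add: logplus_max r0_def mult_left_mono)
      then show ?thesis using nonneg logplus_nonneg[of x] unfolding C_def by linarith
    next
      case False
      then have "1 \<le> r" "4 * K * d \<le> r" by (auto simp: r0_def)
      then have "d * logplus r \<le> logplus x + ln (4 * u)"
        using u by (intro logplus_lower_leading_power[OF d K _ _ _ low]) auto
      then show ?thesis using nonneg unfolding C_def by linarith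
    qed
    ultimately show "\<bar>logplus x - d * logplus r\<bar> \<le> C" by linarith
  qed
qed

lemma powr_comparable:
  fixes Z y A :: real
  assumes Z: "0 < Z" and A: "0 \<le> A" and y: "Z ^ k / 2 \<le> y" "y \<le> 2 * Z ^ k"
  shows "(Z powr A) ^ k / 2 powr A \<le> y powr A" and "y powr A \<le> 2 powr A * (Z powr A) ^ k"
proof -
  have "0 \<le> Z ^ k / 2" using Z by simp
  then have y0: "0 \<le> y" using y(1) by linarith
  have pow: "(Z ^ k) powr A = (Z powr A) ^ k"
    using Z by (simp add: powr_realpow[symmetric] powr_powr powr_power mult.commute)
  show "(Z powr A) ^ k / 2 powr A \<le> y powr A"
    using powr_mono2[OF A _ y(1)] Z by (simp add: pow powr_divide)
  show "y powr A \<le> 2 powr A * (Z powr A) ^ k"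
    using powr_mono2[OF A _ y(2)] Z y0 by (simp add: pow powr_mult)
qed

definition escape_height :: "real \<Rightarrow> complex \<times> complex \<Rightarrow> real" where
  "escape_height A x = logplus (norm (snd x) / norm (fst x) powr A)"

lemma height_step:
  fixes p :: "complex poly" and q :: "complex poly poly"
  assumes p1: "lead_coeff p = 1" and q1: "1 \<le> degree q" and b1: "lead_coeff (lead_coeff q) = 1"
    and pq: "degree q < degree p"
    and al: "alpha_exp (degree p) q = real (degree (lead_coeff q)) / (real (degree p) - real (degree q))"
  shows "\<exists>R C. \<forall>a b. R \<le> norm a \<longrightarrow>
           \<bar>escape_height (alpha_exp (degree p) q) (skew p q (a, b))
             - degree q * escape_height (alpha_exp (degree p) q) (a, b)\<bar> \<le> C"
proof -
  define \<delta> d \<gamma> A where "\<delta> = degree p" and "d = degree q" and "\<gamma> = degree (lead_coeff q)"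
    and "A = alpha_exp (degree p) q"
  have A0: "0 \<le> A" and gam: "real \<gamma> = real (\<delta> - d) * A"
    using al pq by (simp_all add: A_def \<delta>_def d_def \<gamma>_def of_nat_diff)
  define u where "u = (2::real) powr A"
  have u: "1 \<le> u" unfolding u_def using A0 by (simp add: ge_one_powr_ge_zero)
  obtain Rp where Rp: "\<And>z. Rp \<le> norm z \<Longrightarrow>
      norm z ^ \<delta> / 2 \<le> norm (poly p z) \<and> norm (poly p z) \<le> 2 * norm z ^ \<delta>"
    using monic_poly_norm_comparable[OF p1] unfolding \<delta>_def by blast
  obtain Rb where Rb: "Rb \<ge> 1" "\<And>z. Rb \<le> norm z \<Longrightarrow> norm z ^ \<gamma> / 2 \<le> norm (poly (lead_coeff q) z)"
    using monic_poly_norm_comparable[OF b1] unfolding \<gamma>_def by blast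
  obtain K where K: "K \<ge> 0" "\<And>z m. 1 \<le> norm z \<Longrightarrow> m \<le> d \<Longrightarrow>
      norm (poly (coeff q m) z) \<le> K * (norm z powr A) ^ (\<delta> - m)"
    using coeff_norm_bound[of q \<delta>] pq A0 unfolding A_def d_def \<delta>_def by blast
  obtain C where C: "\<And>r x. 0 \<le> r \<Longrightarrow> 0 \<le> x \<Longrightarrow> x \<le> u * K * (\<Sum>m\<le>d. r ^ m) \<Longrightarrow>
      (r ^ d / 2 - K * (\<Sum>m<d. r ^ m)) / u \<le> x \<Longrightarrow> \<bar>logplus x - d * logplus r\<bar> \<le> C"
    using logplus_comparison[OF _ K(1) u, of d] q1 unfolding d_def by blast
  have "\<bar>escape_height A (skew p q (a, b)) - d * escape_height A (a, b)\<bar> \<le> C"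
    if a: "max Rp Rb \<le> norm a" for a b
  proof -
    define t r where "t = norm a powr A" and "r = norm b / t"
    have Z0: "norm a > 0" using a Rb(1) by linarith
    have t0: "t > 0" unfolding t_def using Z0 by simp
    have pa: "norm a ^ \<delta> / 2 \<le> norm (poly p a)" "norm (poly p a) \<le> 2 * norm a ^ \<delta>"
      using Rp[of a] a by auto
    have P: "t ^ \<delta> / u \<le> norm (poly p a) powr A" "norm (poly p a) powr A \<le> u * t ^ \<delta>"
      using powr_comparable[OF Z0 A0 pa] unfolding t_def u_def by auto
    have coeffs: "\<And>m. m \<le> degree q \<Longrightarrow> norm (poly (coeff q m) a) \<le> K * t ^ (\<delta> - m)"
      using K(2)[of a] a Rb(1) unfolding t_def d_def by auto
    have "t ^ (\<delta> - d) = norm a powr real \<gamma>"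
      using Z0 gam by (simp add: t_def powr_power mult.commute)
    also have "\<dots> = norm a ^ \<gamma>" using Z0 by (rule powr_realpow)
    finally have "t ^ (\<delta> - d) = norm a ^ \<gamma>" .
    then have lead: "t ^ (\<delta> - degree q) / 2 \<le> norm (poly (lead_coeff q) a)"
      using Rb(2)[of a] a unfolding d_def by auto
    have dq: "degree q \<le> \<delta>" using pq by (simp add: \<delta>_def)
    have Qup: "norm (qeval q a b) \<le> t ^ \<delta> * (K * (\<Sum>m\<le>d. r ^ m))"
      using qeval_norm_upper[OF t0 dq coeffs, of b] by (simp add: d_def r_def mult_ac)
    have Qlow: "t ^ \<delta> * (r ^ d / 2 - K * (\<Sum>m<d. r ^ m)) \<le> norm (qeval q a b)"
      using qeval_norm_lower[OF t0 dq coeffs lead, of b] by (simp add: d_def r_def)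
    have "0 < t ^ \<delta>" "0 < u" using t0 u by auto
    note quotient = quotient_bounds[OF this norm_ge_zero P Qup Qlow]
    have "0 \<le> r" unfolding r_def using t0 by simp
    then have "\<bar>logplus (norm (qeval q a b) / norm (poly p a) powr A) - d * logplus r\<bar> \<le> C"
      using C[OF _ divide_nonneg_nonneg[OF norm_ge_zero powr_ge_zero]] quotient
      by (simp add: mult.assoc)
    moreover have "escape_height A (skew p q (a, b)) = logplus (norm (qeval q a b) / norm (poly p a) powr A)"
      by (simp add: escape_height_def skew_def)
    moreover have "escape_height A (a, b) = logplus r"
      by (simp add: escape_height_def r_def t_def)
    ultimately show ?thesis by simp
  qed
  then show ?thesis unfolding A_def d_def by blast
qed

lemma normalized_height_increment:
  fixes F :: "'a \<Rightarrow> 'a" and H :: "'a \<Rightarrow> real" and d :: real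
  assumes d: "0 < d" and orbit: "(F ^^ n) x \<in> T" and step: "\<And>y. y \<in> T \<Longrightarrow> \<bar>H (F y) - d * H y\<bar> \<le> C"
  shows "\<bar>H ((F ^^ Suc n) x) / d ^ Suc n - H ((F ^^ n) x) / d ^ n\<bar> \<le> C / d * (1 / d) ^ n"
proof -
  let ?y = "(F ^^ n) x"
  have "H ((F ^^ Suc n) x) / d ^ Suc n - H ?y / d ^ n = (H (F ?y) - d * H ?y) / d ^ Suc n"
    using d by (simp add: field_simps)
  then have "\<bar>H ((F ^^ Suc n) x) / d ^ Suc n - H ?y / d ^ n\<bar> = \<bar>H (F ?y) - d * H ?y\<bar> / d ^ Suc n"
    using d by simp
  also have "\<dots> \<le> C / d ^ Suc n" using step[OF orbit] d by (intro divide_right_mono) auto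
  finally show ?thesis by (simp add: power_divide)
qed

lemma continuous_on_poly_iterate: "continuous_on UNIV (poly (p :: complex poly) ^^ n)"
proof (induction n)
  case (Suc n)
  have "continuous_on UNIV (\<lambda>x. poly p ((poly p ^^ n) x))"
    using Suc by (intro continuous_on_poly) simp
  then show ?case by simp
qed (simp add: continuous_on_id)

lemma compact_increasing_open_cover:
  fixes U :: "nat \<Rightarrow> 'a :: topological_space set"
  assumes "compact K" "\<And>n. open (U n)" "\<And>n. U n \<subseteq> U (Suc n)" "K \<subseteq> (\<Union>n. U n)"
  shows "\<exists>N. K \<subseteq> U N"
proof -
  obtain I where I: "finite I" "K \<subseteq> (\<Union>n\<in>I. U n)"
    using compactE_image[OF assms(1), of UNIV U] assms(2,4) by auto
  have "U n \<subseteq> U (Max (insert 0 I))" if "n \<in> I" for n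
    using lift_Suc_mono_le[of U, OF assms(3), of n "Max (insert 0 I)"] I(1) that by simp
  then have "K \<subseteq> U (Max (insert 0 I))" using I(2) by blast
  then show ?thesis ..
qed

lemma escape_radius_invariant:
  fixes p :: "complex poly"
  assumes R: "\<And>a. R \<le> norm a \<Longrightarrow> norm a \<le> norm (poly p a)"
    and n: "n \<le> m" and z: "R < norm ((poly p ^^ n) z)"
  shows "R < norm ((poly p ^^ m) z)"
  using n
proof (induction m rule: dec_induct)
  case base
  show ?case using z .
next
  case (step m)
  then have "norm ((poly p ^^ m) z) \<le> norm (poly p ((poly p ^^ m) z))" using R by simp
  then show ?case using step.IH by simp
qed

text \<open>Points of V near the origin form a relatively
  compact set, covered by the increasing open sets of points that have escaped by time n.\<close>
lemma uniform_escape: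
  fixes p :: "complex poly" and V :: "complex set"
  assumes R: "\<And>a. R \<le> norm a \<Longrightarrow> norm a \<le> norm (poly p a)"
    and V: "closure V \<subseteq> escape_set p"
  shows "\<exists>N. \<forall>z\<in>V. \<forall>n\<ge>N. R \<le> norm ((poly p ^^ n) z)"
proof -
  define U where "U n = {z. R < norm ((poly p ^^ n) z)}" for n
  have U_mono: "U n \<subseteq> U m" if "n \<le> m" for n m
    using escape_radius_invariant[OF R that] unfolding U_def by blast
  then have U_Suc: "U n \<subseteq> U (Suc n)" for n by simp
  have "compact (closure V \<inter> cball 0 R)" by (simp add: closed_Int_compact)
  moreover have "open (U n)" for n
    unfolding U_def by (intro open_Collect_less continuous_intros continuous_on_poly_iterate)
  moreover have "closure V \<inter> cball 0 R \<subseteq> (\<Union>n. U n)"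
  proof
    fix z
    assume "z \<in> closure V \<inter> cball 0 R"
    then have "filterlim (\<lambda>n. norm ((poly p ^^ n) z)) at_top sequentially"
      using V by (auto simp: escape_set_def)
    then obtain n where "R < norm ((poly p ^^ n) z)"
      by (auto simp: filterlim_at_top_dense eventually_sequentially)
    then show "z \<in> (\<Union>n. U n)" by (auto simp: U_def)
  qed
  ultimately obtain N where N: "closure V \<inter> cball 0 R \<subseteq> U N"
    using compact_increasing_open_cover[of _ U] U_Suc by blast
  have "z \<in> U N" if z: "z \<in> V" for z
  proof (cases "norm z \<le> R")
    case True
    then show ?thesis using N z closure_subset[of V] by (auto simp: subset_iff)
  next
    case False
    then have "z \<in> U 0" by (simp add: U_def)
    then show ?thesis using U_mono[of 0 N] by auto
  qed
  then have "R < norm ((poly p ^^ n) z)" if "z \<in> V" "N \<le> n" for z n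
    using U_mono[OF that(2)] that(1) unfolding U_def by blast
  then show ?thesis by (meson less_imp_le)
qed

lemma uniform_limit_geometric_increments:
  fixes g :: "nat \<Rightarrow> 'a \<Rightarrow> 'b :: banach"
  assumes inc: "eventually (\<lambda>n. \<forall>x\<in>S. norm (g (Suc n) x - g n x) \<le> C * \<theta> ^ n) sequentially"
    and \<theta>: "0 \<le> \<theta>" "\<theta> < 1"
  shows "uniform_limit S g (\<lambda>x. lim (\<lambda>n. g n x)) sequentially"
proof -
  have "summable (\<lambda>n. C * \<theta> ^ n)" using \<theta> by (intro summable_mult summable_geometric) simp
  then obtain l where "uniform_limit S (\<lambda>n x. \<Sum>i<n. g (Suc i) x - g i x) l sequentially"
    using Weierstrass_m_test_ev[OF inc] by blast
  then have "uniform_limit S (\<lambda>n x. (\<Sum>i<n. g (Suc i) x - g i x) + g 0 x) (\<lambda>x. l x + g 0 x) sequentially"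
    by (intro uniform_limit_add uniform_limit_const)
  moreover have "(\<Sum>i<n. g (Suc i) x - g i x) + g 0 x = g n x" for n x
    using sum_lessThan_telescope[of "\<lambda>i. g i x" n] by simp
  ultimately have "uniformly_convergent_on S g"
    unfolding uniformly_convergent_on_def by auto
  then show ?thesis by (simp add: uniformly_convergent_uniform_limit_iff)
qed

theorem proposition4p12:
  fixes p :: "complex poly" and q :: "complex poly poly" and V :: "complex set"
  assumes "lead_coeff p = 1" and "degree p \<ge> 2"
    and "degree q \<ge> 2" and "lead_coeff (lead_coeff q) = 1"
    and "degree p > degree q"
    and "alpha_exp (degree p) q = real (degree (lead_coeff q)) / (real (degree p) - real (degree q))"
    and "\<not> poly_product q"
    and "closure V \<subseteq> escape_set p"
  shows "uniform_limit (V \<times> UNIV)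
     (\<lambda>n (z, w). logplus (norm (snd ((skew p q ^^ n) (z, w)))
                  / norm (fst ((skew p q ^^ n) (z, w))) powr alpha_exp (degree p) q)
                / real (degree q) ^ n)
     (\<lambda>(z, w). lim (\<lambda>n. logplus (norm (Qiter p q n z w)
                  / norm ((poly p ^^ n) z) powr alpha_exp (degree p) q) / real (degree q) ^ n))
     sequentially"
proof -
  define H d where "H = escape_height (alpha_exp (degree p) q)" and "d = real (degree q)"
  define G where "G = (\<lambda>n x. H ((skew p q ^^ n) x) / d ^ n)"
  have d: "0 < d" "1 / d < 1" using assms(3) by (auto simp: d_def)
  obtain R1 C where step: "\<And>a b. R1 \<le> norm a \<Longrightarrow> \<bar>H (skew p q (a, b)) - d * H (a, b)\<bar> \<le> C"
    using height_step[OF assms(1) _ assms(4,5,6)] assms(3) unfolding H_def d_def by fastforce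
  obtain R2 where "\<And>a. R2 \<le> norm a \<Longrightarrow> norm a \<le> norm (poly p a)"
    using monic_poly_expanding[OF assms(1,2)] by blast
  then obtain N where N: "\<And>z n. z \<in> V \<Longrightarrow> N \<le> n \<Longrightarrow> max R1 R2 \<le> norm ((poly p ^^ n) z)"
    using uniform_escape[OF _ assms(8), of "max R1 R2"] by fastforce
  have step': "\<bar>H (skew p q y) - d * H y\<bar> \<le> C" if "y \<in> {y. R1 \<le> norm (fst y)}" for y
    using step[of "fst y" "snd y"] that by simp
  have "\<forall>x\<in>V \<times> UNIV. norm (G (Suc n) x - G n x) \<le> C / d * (1 / d) ^ n" if "N \<le> n" for n
  proof
    fix x :: "complex \<times> complex"
    assume "x \<in> V \<times> UNIV"
    then have "(skew p q ^^ n) x \<in> {y. R1 \<le> norm (fst y)}"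
      using N[of "fst x" n] that by (auto simp: skew_iter)
    from normalized_height_increment[where H = H and F = "skew p q", OF d(1) this step']
    show "norm (G (Suc n) x - G n x) \<le> C / d * (1 / d) ^ n" by (simp add: G_def)
  qed
  then have "uniform_limit (V \<times> UNIV) G (\<lambda>x. lim (\<lambda>n. G n x)) sequentially"
    using d by (intro uniform_limit_geometric_increments[of _ _ "C / d" "1 / d"])
      (auto simp: eventually_sequentially)
  then show ?thesis
    unfolding G_def H_def d_def escape_height_def by (simp add: skew_iter case_prod_beta')
qed

end
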